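(* Let $s$ be a positive integer, let $\mathcal F$ be a hypergraph on a vertex set $V$, and let $i$ be an integer with $0<i<|V|$ such that $\wp(\mathcal F,i)\le\frac{|\mathcal F|}{2^s|V|^{s-1}}$. Then there are at least $i^s$ tuples $U\in V^s$ with $|\mathcal F(U)|\ge\frac{|\mathcal F|}{(2|V|)^s}$.
   Context: For a vertex set $I$, $\mathcal F[I]=\{e\in\mathcal F:e\subseteq I\}$ and $\wp(\mathcal F,i)=\max_{|I|=i}|\mathcal F[I]|$. The link of a vertex set $I$ is $\mathcal F(I)=\{e\setminus I: I\subseteq e\in\mathcal F\}$ (a hypergraph on $V\setminus I$). For a tuple $U$ of vertices (entries may repeat), $|U|$ denotes the number of distinct vertices in $U$ and $\mathcal F(U)$ is the link of the set of distinct vertices of $U$. *)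

theory Defs
  imports Complex_Main
begin

definition induced :: "'a set set \<Rightarrow> 'a set \<Rightarrow> 'a set set" where
  "induced F I = {e \<in> F. e \<subseteq> I}"

definition wp :: "'a set set \<Rightarrow> 'a set \<Rightarrow> nat \<Rightarrow> nat" where
  "wp F V i = Max {card (induced F I) | I. I \<subseteq> V \<and> card I = i}"

definition link :: "'a set set \<Rightarrow> 'a set \<Rightarrow> 'a set set" where
  "link F I = {e - I | e. e \<in> F \<and> I \<subseteq> e}"

end

theory Submission
  imports Defs
begin

text \<open>Grow the tuple one vertex at a time. Suppose the link of a vertex set A is large,
  \<open>|F(A)| \<ge> 2 \<wp>(F,i)\<close>. Every edge containing A either lies inside a given i-set I, or
  contains A together with a vertex outside I; hence \<open>|F(A)| \<le> \<wp>(F,i) + \<Sum>\<^sub>v\<^sub>\<notin>\<^sub>I |F(A \<union> {v})|\<close>.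
  So if fewer than i vertices v had \<open>|F(A \<union> {v})| \<ge> |F(A)|/(2|V|)\<close>, an i-set containing all
  of them would give \<open>|F(A)| < |F(A)|/2 + |F(A)|/2\<close>. Thus every tuple whose link has size at
  least \<open>|F|/(2|V|)\<^sup>t\<close>, t < s, extends in at least i ways to such a tuple of length t + 1.\<close>

lemma card_link: "card (link F I) = card {e \<in> F. I \<subseteq> e}"
proof -
  have "link F I = (\<lambda>e. e - I) ` {e \<in> F. I \<subseteq> e}" unfolding link_def by auto
  moreover have "inj_on (\<lambda>e. e - I) {e \<in> F. I \<subseteq> e}"
    by (rule inj_onI) blast
  ultimately show ?thesis by (simp add: card_image)
qed

lemma card_induced_le_wp:
  assumes "finite V" and "I \<subseteq> V" and "card I = i"
  shows "card (induced F I) \<le> wp F V i"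
proof -
  have "{card (induced F I) |I. I \<subseteq> V \<and> card I = i} \<subseteq> (\<lambda>I. card (induced F I)) ` Pow V"
    by auto
  then have "finite {card (induced F I) |I. I \<subseteq> V \<and> card I = i}"
    using \<open>finite V\<close> finite_subset by blast
  then show ?thesis
    unfolding wp_def by (rule Max_ge) (use assms in blast)
qed

lemma card_link_le_induced_plus_links:
  assumes "finite V" and "\<forall>e\<in>F. e \<subseteq> V"
  shows "card (link F A) \<le> card (induced F I) + (\<Sum>v\<in>V - I. card (link F (insert v A)))"
proof -
  have "finite F"
    using assms finite_Pow_iff finite_subset[of F "Pow V"] by blast
  have "{e \<in> F. A \<subseteq> e} \<subseteq> induced F I \<union> (\<Union>v\<in>V - I. {e \<in> F. insert v A \<subseteq> e})"
    using assms(2) by (auto simp: induced_def)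
  moreover have "finite (induced F I \<union> (\<Union>v\<in>V - I. {e \<in> F. insert v A \<subseteq> e}))"
    by (rule finite_subset[OF _ \<open>finite F\<close>]) (auto simp: induced_def)
  ultimately have "card {e \<in> F. A \<subseteq> e}
      \<le> card (induced F I \<union> (\<Union>v\<in>V - I. {e \<in> F. insert v A \<subseteq> e}))"
    by (intro card_mono)
  also have "\<dots> \<le> card (induced F I) + card (\<Union>v\<in>V - I. {e \<in> F. insert v A \<subseteq> e})"
    by (rule card_Un_le)
  also have "card (\<Union>v\<in>V - I. {e \<in> F. insert v A \<subseteq> e})
      \<le> (\<Sum>v\<in>V - I. card {e \<in> F. insert v A \<subseteq> e})"
    by (rule card_UN_le) (use \<open>finite V\<close> in auto)
  finally show ?thesis by (simp add: card_link)
qed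

lemma many_heavy_vertices:
  assumes "finite V" and "\<forall>e\<in>F. e \<subseteq> V" and "i < card V"
    and "real (wp F V i) \<le> real (card (link F A)) / 2"
  shows "i \<le> card {v \<in> V. real (card (link F A))
                    \<le> 2 * real (card V) * real (card (link F (insert v A)))}"
    (is "i \<le> card ?H")
proof (rule ccontr)
  assume "\<not> i \<le> card ?H"
  moreover have "?H \<subseteq> V" by blast
  ultimately obtain I where "?H \<subseteq> I" "I \<subseteq> V" "card I = i"
    using exists_subset_between[of ?H i V] assms(1,3) by auto
  define a where "a = real (card (link F A)) / (2 * real (card V))"
  have "card V > 0" using assms(3) by simp
  have "V - I \<noteq> {}"
  proof
    assume "V - I = {}"
    then have "card V \<le> card I"
      using \<open>I \<subseteq> V\<close> \<open>finite V\<close> by (intro card_mono) (auto intro: finite_subset)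
    then show False using \<open>card I = i\<close> assms(3) by simp
  qed
  have "(\<Sum>v\<in>V - I. real (card (link F (insert v A)))) < (\<Sum>v\<in>V - I. a)"
  proof (rule sum_strict_mono)
    fix v assume "v \<in> V - I"
    then have "2 * real (card V) * real (card (link F (insert v A))) < real (card (link F A))"
      using \<open>?H \<subseteq> I\<close> by auto
    then show "real (card (link F (insert v A))) < a"
      using \<open>card V > 0\<close> by (simp add: a_def field_simps)
  qed (use \<open>finite V\<close> \<open>V - I \<noteq> {}\<close> in auto)
  also have "\<dots> = real (card (V - I)) * a" by simp
  also have "\<dots> \<le> real (card V) * a"
    by (rule mult_right_mono) (use card_mono[OF \<open>finite V\<close>, of "V - I"] in \<open>auto simp: a_def\<close>)
  also have "\<dots> = real (card (link F A)) / 2"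
    using \<open>card V > 0\<close> by (simp add: a_def)
  finally have "(\<Sum>v\<in>V - I. real (card (link F (insert v A)))) < real (card (link F A)) / 2" .
  moreover have "real (card (link F A))
      \<le> real (card (induced F I)) + (\<Sum>v\<in>V - I. real (card (link F (insert v A))))"
    using card_link_le_induced_plus_links[OF assms(1,2), of A I]
    by (metis of_nat_add of_nat_le_iff of_nat_sum)
  moreover have "card (induced F I) \<le> wp F V i"
    using card_induced_le_wp[OF assms(1) \<open>I \<subseteq> V\<close> \<open>card I = i\<close>] .
  ultimately show False using assms(4) by linarith
qed

lemma card_extensions_ge:
  assumes "finite C"
    and "\<And>W. W \<in> A \<Longrightarrow> i \<le> card (B W)"
    and "\<And>W v. W \<in> A \<Longrightarrow> v \<in> B W \<Longrightarrow> W @ [v] \<in> C"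
  shows "card A * i \<le> card C"
proof (cases "finite A")
  case True
  have "finite (B W)" if "W \<in> A" for W
  proof (rule finite_imageD)
    show "finite ((\<lambda>v. W @ [v]) ` B W)"
      by (rule finite_subset[OF _ assms(1)]) (use that assms(3) in auto)
  qed (simp add: inj_on_def)
  have "card A * i = (\<Sum>W\<in>A. i)" by simp
  also have "\<dots> \<le> (\<Sum>W\<in>A. card (B W))" by (rule sum_mono) (rule assms(2))
  also have "\<dots> = card (Sigma A B)"
    using True \<open>\<And>W. W \<in> A \<Longrightarrow> finite (B W)\<close> by simp
  also have "\<dots> = card ((\<lambda>(W, v). W @ [v]) ` Sigma A B)"
    by (rule card_image[symmetric]) (auto simp: inj_on_def)
  also have "\<dots> \<le> card C"
    by (rule card_mono) (use assms(1,3) in auto)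
  finally show ?thesis .
qed simp

lemma threshold_le_half_layer:
  fixes m n :: real
  assumes "t < s" and "n \<ge> 1" and "m \<ge> 0"
  shows "m / (2 ^ s * n ^ (s - 1)) \<le> (m / (2 * n) ^ t) / 2"
proof -
  have "(2::real) ^ Suc t \<le> 2 ^ s"
    by (rule power_increasing) (use assms in auto)
  moreover have "n ^ t \<le> n ^ (s - 1)"
    by (rule power_increasing) (use assms in auto)
  ultimately have "(2::real) ^ Suc t * n ^ t \<le> 2 ^ s * n ^ (s - 1)"
    by (rule mult_mono) (use assms in auto)
  then have "m / (2 ^ s * n ^ (s - 1)) \<le> m / (2 ^ Suc t * n ^ t)"
    by (intro divide_left_mono) (use assms in auto)
  also have "\<dots> = (m / (2 * n) ^ t) / 2" by (simp add: power_mult_distrib)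
  finally show ?thesis .
qed

lemma many_heavy_tuples:
  assumes "finite V" and "\<forall>e\<in>F. e \<subseteq> V" and "i < card V" and "t \<le> s"
    and "real (wp F V i) \<le> real (card F) / (2 ^ s * real (card V) ^ (s - 1))"
  shows "i ^ t \<le> card {U. length U = t \<and> set U \<subseteq> V \<and>
            real (card (link F (set U))) \<ge> real (card F) / (2 * real (card V)) ^ t}"
  using \<open>t \<le> s\<close>
proof (induction t)
  case 0
  have "link F {} = F" by (auto simp: link_def)
  then have "{U. length U = 0 \<and> set U \<subseteq> V \<and>
      real (card (link F (set U))) \<ge> real (card F) / (2 * real (card V)) ^ 0} = {[]}"
    by auto
  then show ?case by simp
next
  case (Suc t)
  define n where "n = real (card V)"
  have "n \<ge> 1" using assms(3) by (simp add: n_def)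
  define G where "G t = {U. length U = t \<and> set U \<subseteq> V \<and>
      real (card (link F (set U))) \<ge> real (card F) / (2 * n) ^ t}" for t
  define heavy where "heavy W = {v \<in> V. real (card (link F (set W)))
      \<le> 2 * n * real (card (link F (insert v (set W))))}" for W
  have "finite (G (Suc t))"
    using finite_lists_length_eq[OF assms(1), of "Suc t"]
    by (rule finite_subset[rotated]) (auto simp: G_def)
  moreover have "i \<le> card (heavy W)" if "W \<in> G t" for W
  proof -
    have "real (wp F V i) \<le> real (card (link F (set W))) / 2"
      using assms(5) threshold_le_half_layer[of t s n "real (card F)"] Suc.prems \<open>n \<ge> 1\<close> that
      by (simp add: G_def n_def)
    then show ?thesis
      unfolding heavy_def n_def by (rule many_heavy_vertices[OF assms(1-3)])
  qed
  moreover have "W @ [v] \<in> G (Suc t)" if "W \<in> G t" "v \<in> heavy W" for W v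
  proof -
    have "real (card F) / (2 * n) ^ Suc t = (real (card F) / (2 * n) ^ t) / (2 * n)" by simp
    also have "\<dots> \<le> real (card (link F (set W))) / (2 * n)"
      by (rule divide_right_mono) (use that \<open>n \<ge> 1\<close> in \<open>auto simp: G_def\<close>)
    also have "\<dots> \<le> real (card (link F (insert v (set W))))"
      using that(2) \<open>n \<ge> 1\<close> by (simp add: heavy_def field_simps)
    finally show ?thesis using that by (auto simp: G_def heavy_def)
  qed
  ultimately have "card (G t) * i \<le> card (G (Suc t))"
    by (rule card_extensions_ge)
  moreover have "i ^ t \<le> card (G t)"
    using Suc by (simp add: G_def n_def)
  ultimately have "i ^ Suc t \<le> card (G (Suc t))"
    by (metis mult_le_mono1 order_trans power_Suc2)
  then show ?case by (simp add: G_def n_def)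
qed

theorem lemma2p3:
  fixes F :: "'a set set" and V :: "'a set" and s i :: nat
  assumes "finite V"
    and "\<forall>e\<in>F. e \<subseteq> V"
    and "s > 0"
    and "0 < i" and "i < card V"
    and "real (wp F V i) \<le> real (card F) / (2 ^ s * real (card V) ^ (s - 1))"
  shows "card {U :: 'a list. length U = s \<and> set U \<subseteq> V \<and>
            real (card (link F (set U))) \<ge> real (card F) / (2 * real (card V)) ^ s} \<ge> i ^ s"
  using many_heavy_tuples[OF assms(1,2,5) order_refl assms(6)] .

end
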